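(* Let $g:\mathcal S\times\mathcal T\to\{0,1\}$ and let $\mathcal D$ be a distribution over $\mathcal S\times\mathcal T$ such that $(g,\mathcal D)$ satisfies rectangle substitutes. Then for every $\delta\in(0,1)$ there is a deterministic communication protocol using $O(\log(1/\delta))$ bits of communication that $(1-\delta)$-computes $g$ over $\mathcal D$.
   Context: Given $(g,\mathcal D)$, consider the information structure with $(\sigma,\tau)\sim\mathcal D$ (Alice holds $\sigma\in\mathcal S$, Bob holds $\tau\in\mathcal T$) and $Y=g(\sigma,\tau)$. Notation: $\mu_{\sigma\tau}=\mathbb E[Y\mid\sigma,\tau]$; for measurable $S\subseteq\mathcal S$, $T\subseteq\mathcal T$: $\mu_{\sigma T}=\mathbb E[Y\mid\sigma,\tau\in T]$, $\mu_{S\tau}=\mathbb E[Y\mid\sigma\in S,\tau]$, $\mu_{ST}=\mathbb E[Y\mid\sigma\in S,\tau\in T]$; $\mathbb E[\cdot\mid S,T]$ conditions on $\{\sigma\in S,\tau\in T\}$. $(g,\mathcal D)$ satisfies rectangle substitutes if for all measurable $S\subseteq\mathcal S$, $T\subseteq\mathcal T$ with $\mathbb P(\sigma\in S,\tau\in T)>0$: $\mathbb E[(Y-\mu_{S\tau})^2\mid S,T]-\mathbb E[(Y-\mu_{\sigma\tau})^2\mid S,T]\le \mathbb E[(Y-\mu_{ST})^2\mid S,T]-\mathbb E[(Y-\mu_{\sigma T})^2\mid S,T]$. A deterministic communication protocol: Alice and Bob alternately send messages, each a deterministic function of the sender's own input and previous messages, and the output is $h(\pi)\in\{0,1\}$ for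 a function $h$ of the transcript $\pi$. The protocol $(1-\delta)$-computes $g$ over $\mathcal D$ if $\mathbb P_{(\sigma,\tau)\sim\mathcal D}[h(\pi)=g(\sigma,\tau)]\ge1-\delta$. *)

theory Defs
  imports "HOL-Probability.Probability"
begin

text \<open>An internal node is owned by Alice or Bob; the owner sends one bit that is a
  function of her/his own input (dependence on previous messages is encoded by
  the position in the tree).\<close>

datatype ('s, 't) protocol =
    Output bool
  | AliceSends "'s \<Rightarrow> bool" "('s, 't) protocol" "('s, 't) protocol"
  | BobSends "'t \<Rightarrow> bool" "('s, 't) protocol" "('s, 't) protocol"

fun run_protocol :: "('s, 't) protocol \<Rightarrow> 's \<Rightarrow> 't \<Rightarrow> bool" where
  "run_protocol (Output b) s t = b"
| "run_protocol (AliceSends f p q) s t =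
     (if f s then run_protocol p s t else run_protocol q s t)"
| "run_protocol (BobSends f p q) s t =
     (if f t then run_protocol p s t else run_protocol q s t)"

fun protocol_cost :: "('s, 't) protocol \<Rightarrow> nat" where
  "protocol_cost (Output b) = 0"
| "protocol_cost (AliceSends f p q) = Suc (max (protocol_cost p) (protocol_cost q))"
| "protocol_cost (BobSends f p q) = Suc (max (protocol_cost p) (protocol_cost q))"

fun protocol_measurable :: "'s measure \<Rightarrow> 't measure \<Rightarrow> ('s, 't) protocol \<Rightarrow> bool" where
  "protocol_measurable M1 M2 (Output b) = True"
| "protocol_measurable M1 M2 (AliceSends f p q) =
     (f \<in> M1 \<rightarrow>\<^sub>M count_space UNIV \<and> protocol_measurable M1 M2 p \<and> protocol_measurable M1 M2 q)"
| "protocol_measurable M1 M2 (BobSends f p q) =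
     (f \<in> M2 \<rightarrow>\<^sub>M count_space UNIV \<and> protocol_measurable M1 M2 p \<and> protocol_measurable M1 M2 q)"

definition Yval :: "('s \<times> 't \<Rightarrow> bool) \<Rightarrow> 's \<times> 't \<Rightarrow> real" where
  "Yval g \<omega> = (if g \<omega> then 1 else 0)"

text \<open>For a rectangle S x T of positive probability,
  N is D conditioned on {sigma \<in> S, tau \<in> T}.
  mu_{sigma tau} = E[Y | sigma,tau] = Y (Y is a function of (sigma,tau));
  mu_{sigma T} = E[Y | sigma, tau \<in> T] is the conditional expectation under N
  given the sigma-algebra generated by sigma (= fst); similarly mu_{S tau};
  mu_{S T} = E_N[Y].\<close>
definition rectangle_substitutes ::
  "'s measure \<Rightarrow> 't measure \<Rightarrow> ('s \<times> 't \<Rightarrow> bool) \<Rightarrow> ('s \<times> 't) measure \<Rightarrow> bool" where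
  "rectangle_substitutes M1 M2 g D \<longleftrightarrow>
    (\<forall>S T. S \<in> sets M1 \<longrightarrow> T \<in> sets M2 \<longrightarrow> measure D (S \<times> T) > 0 \<longrightarrow>
      (let N = uniform_measure D (S \<times> T);
           Y = Yval g;
           mu_sT = real_cond_exp N (vimage_algebra (space D) fst M1) Y;
           mu_St = real_cond_exp N (vimage_algebra (space D) snd M2) Y;
           mu_ST = integral\<^sup>L N Y;
           mu_st = Y
       in (\<integral>\<omega>. (Y \<omega> - mu_St \<omega>)\<^sup>2 \<partial>N) - (\<integral>\<omega>. (Y \<omega> - mu_st \<omega>)\<^sup>2 \<partial>N)
          \<le> (\<integral>\<omega>. (Y \<omega> - mu_ST)\<^sup>2 \<partial>N) - (\<integral>\<omega>. (Y \<omega> - mu_sT \<omega>)\<^sup>2 \<partial>N)))"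

end

theory Submission
  imports Defs
begin

text \<open>
  The potential of a rectangle \<open>R\<close> is \<open>a b / (a + b)\<close>, where \<open>a\<close> and \<open>b\<close> are the masses of
  \<open>g = 1\<close> and \<open>g = 0\<close> in \<open>R\<close>; answering the majority value on \<open>R\<close> errs with probability
  \<open>min a b\<close>, at most twice the potential.
  Conditioned on a non-monochromatic rectangle, rectangle substitutes says that the errors of
  predicting \<open>Y = g\<close> from \<open>\<sigma>\<close> alone and from \<open>\<tau>\<close> alone add up to at most the variance
  \<open>q (1 - q)\<close> of \<open>Y\<close>, so one party's conditional expectation of \<open>Y\<close> explains half of that
  variance. A level set of this conditional expectation is then an event \<open>G\<close> of that party
  whose covariance with \<open>Y\<close> is large, and since splitting \<open>R\<close> along \<open>G\<close> loses exactly a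
  squared covariance term of potential, one bit of communication decreases the total
  potential by the factor \<open>143/144\<close>. Recursing to depth \<open>k = \<lceil>144 ln (1/\<delta>)\<rceil>\<close>
  leaves error at most \<open>2 (143/144)^k / 4 \<le> \<delta>\<close>.
\<close>

section \<open>Events correlated with a conditional expectation\<close>

lemma small_mean_split_bound:
  fixes q w y :: real
  assumes q: "0 < q" "q \<le> 1/6" and w: "w \<le> 1" "w / 4 \<le> y" "y \<le> w"
    and y: "q / 4 \<le> y" "y \<le> q"
  shows "0 < w \<and> w < 1 \<and> w * (1 - w) * q * (1 - q) \<le> 144 * (y - w * q)^2"
proof -
  have w0: "0 < w" and w1: "w < 1" using q w y by linarith+
  have "w * q \<le> w / 6" using q w0 by (simp add: mult_left_mono)
  then have lower_w: "w / 12 \<le> y - w * q" using w by linarith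
  have "w * q \<le> 4 * y * q" using w q by (simp add: mult_right_mono)
  also have "\<dots> \<le> 4 * y / 6" using q y by (simp add: mult_left_mono)
  finally have lower_q: "q / 12 \<le> y - w * q" using y by linarith
  have "w * (1 - w) * q * (1 - q) \<le> w * q"
    using w0 w1 q by (simp add: mult_le_one mult_left_le)
  also have "\<dots> = 144 * ((w / 12) * (q / 12))" by simp
  also have "\<dots> \<le> 144 * (y - w * q)^2"
    unfolding power2_eq_square using lower_w lower_q w0 q by (intro mult_left_mono mult_mono) auto
  finally show ?thesis using w0 w1 by blast
qed

lemma moderate_mean_split_bound:
  fixes q w e :: real
  assumes q: "1/6 \<le> q" "q \<le> 5/6" and e: "q * (1 - q) / 2 \<le> e" "e \<le> w" "e \<le> (1 - w) * q"
  shows "0 < w \<and> w < 1 \<and> w * (1 - w) * q * (1 - q) \<le> 144 * e^2"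
proof -
  have "0 \<le> (q - 1/6) * (5/6 - q)" using q by simp
  moreover have "(q - 1/6) * (5/6 - q) = q * (1 - q) - 5/36" by (simp add: field_simps)
  ultimately have v: "5/36 \<le> q * (1 - q)" by simp
  have w0: "0 < w" using v e by linarith
  have "0 < (1 - w) * q" using v e by linarith
  then have w1: "w < 1" using q by (simp add: zero_less_mult_iff)
  have "w * (1 - w) * (q * (1 - q)) \<le> 1 * (q * (1 - q))"
    using w0 w1 v by (intro mult_right_mono) (simp_all add: mult_le_one)
  also have "\<dots> \<le> 36 * (q * (1 - q)) * (q * (1 - q))" using v by (intro mult_right_mono) auto
  also have "\<dots> = 144 * ((q * (1 - q) / 2) * (q * (1 - q) / 2))" by simp
  also have "\<dots> \<le> 144 * e^2" unfolding power2_eq_square using e v by (intro mult_left_mono mult_mono) auto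
  finally show ?thesis using w0 w1 by (simp add: mult.assoc)
qed

context prob_space
begin

lemma integrable_bounded:
  fixes f :: "'a \<Rightarrow> real"
  assumes "f \<in> borel_measurable M" and "\<And>x. x \<in> space M \<Longrightarrow> \<bar>f x\<bar> \<le> B"
  shows "integrable M f"
  using assms by (intro integrable_const_bound[where B=B]) (auto intro!: AE_I2)

lemma integral_indicator_mult_const:
  assumes "A \<in> events"
  shows "(\<integral>x. indicator A x * c \<partial>M) = prob A * c"
  using assms sets.sets_into_space by (simp add: Int_absorb2)

lemma integral_indicator_mult_bounds:
  fixes f :: "'a \<Rightarrow> real"
  assumes A: "A \<in> events" and f: "integrable M f" and bounds: "\<And>x. x \<in> A \<Longrightarrow> c \<le> f x \<and> f x \<le> d"
  shows "prob A * c \<le> (\<integral>x. indicator A x * f x \<partial>M)" and "(\<integral>x. indicator A x * f x \<partial>M) \<le> prob A * d"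
proof -
  have int: "integrable M (\<lambda>x. indicator A x * f x)" "integrable M (\<lambda>x. indicator A x * k)" for k :: real
    using integrable_real_mult_indicator[OF A f] A by (simp_all add: mult.commute emeasure_eq_measure)
  show "prob A * c \<le> (\<integral>x. indicator A x * f x \<partial>M)"
    unfolding integral_indicator_mult_const[OF A, symmetric]
    by (rule integral_mono[OF int(2) int(1)]) (auto simp: indicator_def bounds)
  show "(\<integral>x. indicator A x * f x \<partial>M) \<le> prob A * d"
    unfolding integral_indicator_mult_const[OF A, symmetric]
    by (rule integral_mono[OF int(1) int(2)]) (auto simp: indicator_def bounds)
qed

lemma integral_indicator_Compl_mult:
  fixes f :: "'a \<Rightarrow> real"
  assumes A: "A \<in> events" and f: "integrable M f"
  shows "(\<integral>x. indicator (space M - A) x * f x \<partial>M) = expectation f - (\<integral>x. indicator A x * f x \<partial>M)"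
proof -
  have "expectation f = (\<integral>x. indicator A x * f x + indicator (space M - A) x * f x \<partial>M)"
    by (rule Bochner_Integration.integral_cong) (auto simp: indicator_def)
  also have "\<dots> = (\<integral>x. indicator A x * f x \<partial>M) + (\<integral>x. indicator (space M - A) x * f x \<partial>M)"
    using A f by (intro Bochner_Integration.integral_add)
      (auto simp: mult.commute[of "indicator _ _"] intro: integrable_real_mult_indicator)
  finally show ?thesis by simp
qed

lemma exists_split_small_mean:
  fixes h :: "'a \<Rightarrow> real"
  assumes sub: "subalgebra M F" and h: "h \<in> borel_measurable F"
    and h01: "\<And>x. x \<in> space M \<Longrightarrow> 0 \<le> h x \<and> h x \<le> 1"
    and q: "q = expectation h" "0 < q" "q \<le> 1/6"
    and moment: "q * (1 + q) / 2 \<le> expectation (\<lambda>x. (h x)^2)"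
  shows "\<exists>G\<in>sets F. 0 < prob G \<and> prob G < 1 \<and>
     prob G * (1 - prob G) * q * (1 - q) \<le> 144 * ((\<integral>x. indicator G x * h x \<partial>M) - prob G * q)^2"
proof -
  have [measurable]: "h \<in> borel_measurable M" using measurable_from_subalg[OF sub h] .
  define G where "G = {x \<in> space M. 1/4 \<le> h x}"
  have space_F: "space F = space M" using sub by (simp add: subalgebra_def)
  have GF: "G \<in> sets F" unfolding G_def space_F[symmetric] using h by measurable
  then have G[measurable]: "G \<in> events" using sub by (auto simp: subalgebra_def)
  define y where "y = (\<integral>x. indicator G x * h x \<partial>M)"
  have int_h: "integrable M h" by (rule integrable_bounded[where B=1]) (auto dest: h01)
  have int_Gh: "integrable M (\<lambda>x. indicator G x * h x)"
    by (rule integrable_bounded[where B=1]) (auto simp: indicator_def dest: h01)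
  have int_h2: "integrable M (\<lambda>x. (h x)^2)"
    by (rule integrable_bounded[where B=1]) (auto simp: abs_square_le_1 dest: h01)
  have "expectation (\<lambda>x. (h x)^2) \<le> expectation (\<lambda>x. indicator G x * h x + h x / 4)"
  proof (rule integral_mono)
    fix x assume x: "x \<in> space M"
    show "(h x)^2 \<le> indicator G x * h x + h x / 4"
    proof (cases "x \<in> G")
      case True
      have "h x * h x \<le> h x * 1" using h01[OF x] by (intro mult_left_mono) auto
      then show ?thesis using True h01[OF x] by (simp add: power2_eq_square)
    next
      case False
      then have "h x * h x \<le> h x * (1/4)" using x h01[OF x] unfolding G_def by (intro mult_left_mono) auto
      then show ?thesis using False by (simp add: power2_eq_square)
    qed
  qed (use int_Gh int_h int_h2 in auto)
  also have "\<dots> = y + q / 4" using int_Gh int_h q(1) by (simp add: y_def)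
  finally have "q / 2 + q * q / 2 \<le> y + q / 4" using moment by (simp add: algebra_simps)
  moreover have "0 \<le> q * q" by simp
  ultimately have "q / 4 \<le> y" by linarith
  moreover have "\<And>x. x \<in> G \<Longrightarrow> 1/4 \<le> h x \<and> h x \<le> 1" using h01 by (auto simp: G_def)
  then have "prob G * (1/4) \<le> y" "y \<le> prob G * 1"
    unfolding y_def by (intro integral_indicator_mult_bounds[OF G int_h]; blast)+
  moreover have "y \<le> q"
    unfolding y_def q(1) by (rule integral_mono[OF int_Gh int_h]) (auto simp: indicator_def dest: h01)
  ultimately show ?thesis
    using small_mean_split_bound[OF q(2,3) prob_le_1, of G y] GF unfolding y_def by (simp, blast)
qed

lemma variance_le_integral_excess:
  fixes h :: "'a \<Rightarrow> real"
  assumes h: "h \<in> borel_measurable M" and h01: "\<And>x. x \<in> space M \<Longrightarrow> 0 \<le> h x \<and> h x \<le> 1"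
    and q: "q = expectation h"
  defines "G \<equiv> {x \<in> space M. q < h x}"
  shows "expectation (\<lambda>x. (h x)^2) - q^2 \<le> (\<integral>x. indicator G x * (h x - q) \<partial>M)"
proof -
  note h[measurable]
  define d where "d = (\<lambda>x. h x - q)"
  define e where "e = (\<integral>x. indicator G x * d x \<partial>M)"
  have G[measurable]: "G \<in> events" unfolding G_def by measurable
  have int_h: "integrable M h" by (rule integrable_bounded[OF h, where B=1]) (auto dest: h01)
  then have int_d: "integrable M d" by (simp add: d_def)
  have int_h2: "integrable M (\<lambda>x. (h x)^2)"
    by (rule integrable_bounded[where B=1]) (auto simp: abs_square_le_1 dest: h01)
  have int_Gd: "integrable M (\<lambda>x. indicator A x * d x)" if "A \<in> events" for A
    using integrable_real_mult_indicator[OF that int_d] by (simp add: mult.commute)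
  have e_Compl: "(\<integral>x. indicator (space M - G) x * d x \<partial>M) = - e"
    using integral_indicator_Compl_mult[OF G int_d] int_h q by (simp add: e_def d_def prob_space)
  have "expectation (\<lambda>x. (h x)^2) - q^2 = expectation (\<lambda>x. (h x)^2 - 2 * q * h x + q^2)"
    using int_h int_h2 q by (simp add: prob_space power2_eq_square)
  also have "\<dots> \<le> expectation (\<lambda>x. (1 - q) * (indicator G x * d x) - q * (indicator (space M - G) x * d x))"
  proof (rule integral_mono)
    fix x assume x: "x \<in> space M"
    show "(h x)^2 - 2 * q * h x + q^2 \<le> (1 - q) * (indicator G x * d x) - q * (indicator (space M - G) x * d x)"
    proof (cases "x \<in> G")
      case True
      then have "d x * d x \<le> (1 - q) * d x" using x h01[OF x] by (intro mult_right_mono) (auto simp: G_def d_def)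
      then show ?thesis using True by (simp add: d_def power2_eq_square algebra_simps)
    next
      case False
      then have "(- d x) * (- d x) \<le> q * (- d x)" using x h01[OF x] by (intro mult_right_mono) (auto simp: G_def d_def)
      then show ?thesis using False x by (simp add: d_def power2_eq_square algebra_simps)
    qed
  qed (use int_h int_h2 int_Gd G in auto)
  also have "\<dots> = e" using int_Gd[OF G] int_Gd[of "space M - G"] e_Compl by (simp add: e_def algebra_simps)
  finally show ?thesis by (simp add: e_def d_def)
qed

lemma exists_split_moderate_mean:
  fixes h :: "'a \<Rightarrow> real"
  assumes sub: "subalgebra M F" and h: "h \<in> borel_measurable F"
    and h01: "\<And>x. x \<in> space M \<Longrightarrow> 0 \<le> h x \<and> h x \<le> 1"
    and q: "q = expectation h" "1/6 \<le> q" "q \<le> 5/6"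
    and moment: "q * (1 + q) / 2 \<le> expectation (\<lambda>x. (h x)^2)"
  shows "\<exists>G\<in>sets F. 0 < prob G \<and> prob G < 1 \<and>
     prob G * (1 - prob G) * q * (1 - q) \<le> 144 * ((\<integral>x. indicator G x * h x \<partial>M) - prob G * q)^2"
proof -
  have hM[measurable]: "h \<in> borel_measurable M" using measurable_from_subalg[OF sub h] .
  define G where "G = {x \<in> space M. q < h x}"
  define e where "e = (\<integral>x. indicator G x * (h x - q) \<partial>M)"
  have space_F: "space F = space M" using sub by (simp add: subalgebra_def)
  have GF: "G \<in> sets F" unfolding G_def space_F[symmetric] using h by measurable
  then have G: "G \<in> events" using sub by (auto simp: subalgebra_def)
  have int_h: "integrable M h" by (rule integrable_bounded[where B=1]) (auto dest: h01)
  then have int_d: "integrable M (\<lambda>x. h x - q)" by simp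
  have "expectation (\<lambda>x. (h x)^2) - q^2 \<le> e"
    unfolding e_def G_def by (rule variance_le_integral_excess[OF hM h01 q(1)])
  then have lower: "q * (1 - q) / 2 \<le> e" using moment by (simp add: algebra_simps power2_eq_square)
  have "\<And>x. x \<in> G \<Longrightarrow> 0 \<le> h x - q \<and> h x - q \<le> 1" using h01 q(2) by (fastforce simp: G_def)
  then have e_le_w: "e \<le> prob G"
    using integral_indicator_mult_bounds(2)[OF G int_d] unfolding e_def by fastforce
  have "\<And>x. x \<in> space M - G \<Longrightarrow> - q \<le> h x - q \<and> h x - q \<le> 0" using h01 by (auto simp: G_def)
  then have "prob (space M - G) * (- q) \<le> (\<integral>x. indicator (space M - G) x * (h x - q) \<partial>M)"
    using G by (intro integral_indicator_mult_bounds(1)[OF _ int_d, where c="- q" and d=0]) auto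
  also have "\<dots> = - e" using integral_indicator_Compl_mult[OF G int_d] int_h q(1) by (simp add: e_def prob_space)
  finally have e_le_compl: "e \<le> (1 - prob G) * q" using prob_compl[OF G] by simp
  have "e = (\<integral>x. indicator G x * h x - indicator G x * q \<partial>M)"
    by (simp add: e_def right_diff_distrib)
  also have "\<dots> = (\<integral>x. indicator G x * h x \<partial>M) - prob G * q"
    using integrable_real_mult_indicator[OF G int_h] G
    by (simp add: mult.commute emeasure_eq_measure integral_indicator_mult_const)
  finally show ?thesis
    using moderate_mean_split_bound[OF q(2,3) lower] e_le_w e_le_compl GF by auto
qed

lemma exists_split_large_mean:
  fixes h :: "'a \<Rightarrow> real"
  assumes sub: "subalgebra M F" and h: "h \<in> borel_measurable F"
    and h01: "\<And>x. x \<in> space M \<Longrightarrow> 0 \<le> h x \<and> h x \<le> 1"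
    and q: "q = expectation h" "5/6 \<le> q" "q < 1"
    and moment: "q * (1 + q) / 2 \<le> expectation (\<lambda>x. (h x)^2)"
  shows "\<exists>G\<in>sets F. 0 < prob G \<and> prob G < 1 \<and>
     prob G * (1 - prob G) * q * (1 - q) \<le> 144 * ((\<integral>x. indicator G x * h x \<partial>M) - prob G * q)^2"
proof -
  have [measurable]: "h \<in> borel_measurable M" using measurable_from_subalg[OF sub h] .
  have int_h: "integrable M h" by (rule integrable_bounded[where B=1]) (auto dest: h01)
  have int_h2: "integrable M (\<lambda>x. (h x)^2)"
    by (rule integrable_bounded[where B=1]) (auto simp: abs_square_le_1 dest: h01)
  have mean: "1 - q = expectation (\<lambda>x. 1 - h x)" using int_h q(1) by (simp add: prob_space)
  have "expectation (\<lambda>x. (1 - h x)^2) = expectation (\<lambda>x. 1 - 2 * h x + (h x)^2)"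
    by (simp add: power2_eq_square algebra_simps)
  also have "\<dots> = 1 - 2 * q + expectation (\<lambda>x. (h x)^2)" using int_h int_h2 q(1) by (simp add: prob_space)
  finally have "(1 - q) * (1 + (1 - q)) / 2 \<le> expectation (\<lambda>x. (1 - h x)^2)"
    using moment by (simp add: field_simps)
  then obtain G where G: "G \<in> sets F" "0 < prob G" "prob G < 1"
    "prob G * (1 - prob G) * (1 - q) * (1 - (1 - q))
      \<le> 144 * ((\<integral>x. indicator G x * (1 - h x) \<partial>M) - prob G * (1 - q))^2"
    using exists_split_small_mean[OF sub _ _ mean] h h01 q by fastforce
  have "G \<in> events" using G(1) sub by (auto simp: subalgebra_def)
  define y where "y = (\<integral>x. indicator G x * h x \<partial>M)"
  define z where "z = (\<integral>x. indicator G x * (1 - h x) \<partial>M)"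
  have "z = (\<integral>x. indicator G x * 1 - indicator G x * h x \<partial>M)"
    by (simp add: z_def right_diff_distrib)
  also have "\<dots> = prob G - y"
    using integrable_real_mult_indicator[OF \<open>G \<in> events\<close> int_h] \<open>G \<in> events\<close>
    by (subst Bochner_Integration.integral_diff) (auto simp: y_def mult.commute emeasure_eq_measure)
  finally have "z - prob G * (1 - q) = - (y - prob G * q)" by (simp add: algebra_simps)
  then have square: "(z - prob G * (1 - q))^2 = (y - prob G * q)^2" by (metis power2_minus)
  have "prob G * (1 - prob G) * q * (1 - q) \<le> 144 * (y - prob G * q)^2"
    using G(4)[folded z_def, unfolded square] by (simp add: ac_simps)
  then show ?thesis using G(1-3) unfolding y_def by blast
qed

lemma exists_split_of_second_moment:
  fixes h :: "'a \<Rightarrow> real"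
  assumes sub: "subalgebra M F" and h: "h \<in> borel_measurable F"
    and h01: "\<And>x. x \<in> space M \<Longrightarrow> 0 \<le> h x \<and> h x \<le> 1"
    and q: "q = expectation h" "0 < q" "q < 1"
    and moment: "q * (1 + q) / 2 \<le> expectation (\<lambda>x. (h x)^2)"
  shows "\<exists>G\<in>sets F. 0 < prob G \<and> prob G < 1 \<and>
     prob G * (1 - prob G) * q * (1 - q) \<le> 144 * ((\<integral>x. indicator G x * h x \<partial>M) - prob G * q)^2"
proof -
  consider "q \<le> 1/6" | "1/6 \<le> q" "q \<le> 5/6" | "5/6 \<le> q" by linarith
  then show ?thesis
  proof cases
    case 1
    from exists_split_small_mean[OF sub h h01 q(1,2) this moment] show ?thesis .
  next
    case 2
    from exists_split_moderate_mean[OF sub h h01 q(1) this moment] show ?thesis .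
  next
    case 3
    from exists_split_large_mean[OF sub h h01 q(1) this q(3) moment] show ?thesis .
  qed
qed

lemma real_cond_exp_unit_interval_version:
  fixes Y :: "'a \<Rightarrow> real"
  assumes sub: "subalgebra M F" and Y: "Y \<in> borel_measurable M"
    and Y01: "\<And>x. x \<in> space M \<Longrightarrow> 0 \<le> Y x \<and> Y x \<le> 1"
  obtains h where "h \<in> borel_measurable F" "\<And>x. x \<in> space M \<Longrightarrow> 0 \<le> h x \<and> h x \<le> 1"
    "AE x in M. h x = real_cond_exp M F Y x"
proof
  interpret finite_measure_subalgebra M F by unfold_locales (rule sub)
  have int_Y: "integrable M Y" by (rule integrable_bounded[OF Y, where B=1]) (use Y01 in force)
  have "AE x in M. 0 \<le> real_cond_exp M F Y x"
    by (rule real_cond_exp_ge_c[OF int_Y]) (use Y01 in \<open>force intro!: AE_I2\<close>)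
  moreover have "AE x in M. real_cond_exp M F Y x \<le> 1"
    by (rule real_cond_exp_le_c[OF int_Y]) (use Y01 in \<open>force intro!: AE_I2\<close>)
  ultimately
  show "AE x in M. max 0 (min 1 (real_cond_exp M F Y x)) = real_cond_exp M F Y x"
    by eventually_elim auto
qed auto

lemma integral_mult_cond_exp_version:
  fixes Y h f :: "'a \<Rightarrow> real"
  assumes sub: "subalgebra M F" and Y: "Y \<in> borel_measurable M" and f: "f \<in> borel_measurable F"
    and fY: "integrable M (\<lambda>x. f x * Y x)"
    and h_meas: "h \<in> borel_measurable M" and h: "AE x in M. h x = real_cond_exp M F Y x"
  shows "(\<integral>x. f x * h x \<partial>M) = (\<integral>x. f x * Y x \<partial>M)"
proof -
  interpret finite_measure_subalgebra M F by unfold_locales (rule sub)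
  note [measurable] = h_meas measurable_from_subalg[OF sub f] measurable_from_subalg[OF sub borel_measurable_cond_exp]
  have "(\<integral>x. f x * h x \<partial>M) = (\<integral>x. f x * real_cond_exp M F Y x \<partial>M)"
    by (rule integral_cong_AE) (use h in auto)
  also have "\<dots> = (\<integral>x. f x * Y x \<partial>M)" by (rule real_cond_exp_intg(2)[OF fY f Y])
  finally show ?thesis .
qed

lemma exists_split_of_cond_exp_error:
  fixes Y :: "'a \<Rightarrow> real"
  assumes sub: "subalgebra M F" and Y[measurable]: "Y \<in> borel_measurable M"
    and Y01: "\<And>x. x \<in> space M \<Longrightarrow> Y x = 0 \<or> Y x = 1"
    and q: "q = expectation Y" "0 < q" "q < 1"
    and error: "expectation (\<lambda>x. (Y x - real_cond_exp M F Y x)^2) \<le> q * (1 - q) / 2"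
  shows "\<exists>G\<in>sets F. 0 < prob G \<and> prob G < 1 \<and>
     prob G * (1 - prob G) * q * (1 - q) \<le> 144 * ((\<integral>x. indicator G x * Y x \<partial>M) - prob G * q)^2"
proof -
  have Y_unit: "\<And>x. x \<in> space M \<Longrightarrow> 0 \<le> Y x \<and> Y x \<le> 1" using Y01 by force
  obtain h where h[measurable]: "h \<in> borel_measurable F"
    and h01: "\<And>x. x \<in> space M \<Longrightarrow> 0 \<le> h x \<and> h x \<le> 1"
    and h_cond_exp: "AE x in M. h x = real_cond_exp M F Y x"
    using real_cond_exp_unit_interval_version[OF sub Y Y_unit] by blast
  have hM[measurable]: "h \<in> borel_measurable M" using measurable_from_subalg[OF sub h] .
  have int_Y: "integrable M Y" by (rule integrable_bounded[OF Y, where B=1]) (use Y01 in force)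
  have int_hY: "integrable M (\<lambda>x. h x * Y x)"
    by (rule integrable_bounded[where B=1]) (use h01 Y01 in \<open>force simp: abs_mult\<close>)+
  have int_h2: "integrable M (\<lambda>x. (h x)^2)"
    by (rule integrable_bounded[where B=1]) (use h01 in \<open>force simp: abs_square_le_1\<close>)+
  have mean: "q = expectation h"
    using integral_mult_cond_exp_version[OF sub Y _ _ hM h_cond_exp, of "\<lambda>_. 1"] int_Y q(1) by simp
  have hY: "expectation (\<lambda>x. h x * Y x) = expectation (\<lambda>x. (h x)^2)"
    using integral_mult_cond_exp_version[OF sub Y h int_hY hM h_cond_exp] by (simp add: power2_eq_square)
  have "expectation (\<lambda>x. (Y x - real_cond_exp M F Y x)^2) = expectation (\<lambda>x. Y x - 2 * (h x * Y x) + (h x)^2)"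
    by (rule integral_cong_AE) (use h_cond_exp Y01 in \<open>auto simp: power2_eq_square algebra_simps\<close>)
  also have "\<dots> = q - expectation (\<lambda>x. (h x)^2)" using int_Y int_hY int_h2 hY q(1) by simp
  finally have "q * (1 + q) / 2 \<le> expectation (\<lambda>x. (h x)^2)" using error by (simp add: field_simps)
  then obtain G where G: "G \<in> sets F" "0 < prob G" "prob G < 1"
    "prob G * (1 - prob G) * q * (1 - q) \<le> 144 * ((\<integral>x. indicator G x * h x \<partial>M) - prob G * q)^2"
    using exists_split_of_second_moment[OF sub h h01 mean q(2,3)] by blast
  have "G \<in> events" using G(1) sub by (auto simp: subalgebra_def)
  then have "(\<integral>x. indicator G x * h x \<partial>M) = (\<integral>x. indicator G x * Y x \<partial>M)"
    using G(1) int_Y by (intro integral_mult_cond_exp_version[OF sub Y _ _ hM h_cond_exp])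
      (auto simp: mult.commute[of "indicator G _"] intro: integrable_real_mult_indicator)
  then show ?thesis using G by auto
qed

end

section \<open>The potential of a rectangle\<close>

definition half_hmean :: "real \<Rightarrow> real \<Rightarrow> real" where
  "half_hmean a b = a * b / (a + b)"

lemma half_hmean_add_split:
  fixes a1 b1 a0 b0 u1 u0 :: real
  assumes u: "u1 = a1 + b1" "u0 = a0 + b0" and nonzero: "u1 \<noteq> 0" "u0 \<noteq> 0" "u1 + u0 \<noteq> 0"
  shows "half_hmean a1 b1 + half_hmean a0 b0
           = half_hmean (a1 + a0) (b1 + b0) - (a1 * b0 - a0 * b1)^2 / ((u1 + u0) * u1 * u0)"
proof -
  have "half_hmean a1 b1 = a1 * b1 / u1" "half_hmean a0 b0 = a0 * b0 / u0"
    "half_hmean (a1 + a0) (b1 + b0) = (a1 + a0) * (b1 + b0) / (u1 + u0)"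
    unfolding half_hmean_def u by (simp_all add: algebra_simps)
  moreover have "a1 * b1 / u1 + a0 * b0 / u0 = (a1 * b1 * u0 * (u1 + u0) + a0 * b0 * u1 * (u1 + u0)) / ((u1 + u0) * u1 * u0)"
    using nonzero by (simp add: add_divide_distrib)
  moreover have "a1 * b1 * u0 * (u1 + u0) + a0 * b0 * u1 * (u1 + u0)
      = (a1 + a0) * (b1 + b0) * u1 * u0 - (a1 * b0 - a0 * b1)^2"
    unfolding u by (simp add: power2_eq_square algebra_simps)
  moreover have "(a1 + a0) * (b1 + b0) * u1 * u0 / ((u1 + u0) * u1 * u0) = (a1 + a0) * (b1 + b0) / (u1 + u0)"
    using nonzero by simp
  ultimately show ?thesis by (simp add: diff_divide_distrib)
qed

lemma half_hmean_split_decrease: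
  fixes a1 b1 a0 b0 :: real
  assumes pos: "0 < a1 + b1" "0 < a0 + b0"
    and corr: "(a1 + b1) * (a0 + b0) * ((a1 + a0) * (b1 + b0)) \<le> 144 * (a1 * b0 - a0 * b1)^2"
  shows "half_hmean a1 b1 + half_hmean a0 b0 \<le> 143/144 * half_hmean (a1 + a0) (b1 + b0)"
proof -
  obtain u1 u0 p where u: "u1 = a1 + b1" "u0 = a0 + b0" and p: "p = (a1 + a0) * (b1 + b0)" by blast
  have "half_hmean (a1 + a0) (b1 + b0) = p / (u1 + u0)" unfolding half_hmean_def u p by (simp add: algebra_simps)
  also have "\<dots> = u1 * u0 * p / ((u1 + u0) * u1 * u0)" using pos u by simp
  also have "\<dots> \<le> 144 * (a1 * b0 - a0 * b1)^2 / ((u1 + u0) * u1 * u0)"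
    using corr pos u p by (intro divide_right_mono) auto
  finally show ?thesis using half_hmean_add_split[OF u] pos u by simp
qed

lemma min_le_2_half_hmean:
  fixes a b :: real
  assumes "0 \<le> a" "0 \<le> b"
  shows "min a b \<le> 2 * half_hmean a b"
proof (cases "a + b = 0")
  case False
  have "min a b * (a + b) \<le> 2 * (a * b)"
    using assms by (cases "a \<le> b") (simp_all add: min_def algebra_simps mult_left_mono mult_right_mono)
  with False assms show ?thesis unfolding half_hmean_def by (simp add: field_simps)
qed (use assms in \<open>simp add: half_hmean_def\<close>)

lemma split_inequality_unnormalize:
  fixes a1 b1 a0 b0 c :: real
  assumes c: "c = a1 + b1 + a0 + b0" "0 < c"
    and normalized: "(a1 + b1) / c * (1 - (a1 + b1) / c) * ((a1 + a0) / c) * (1 - (a1 + a0) / c)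
      \<le> 144 * (a1 / c - (a1 + b1) / c * ((a1 + a0) / c))^2"
  shows "(a1 + b1) * (a0 + b0) * ((a1 + a0) * (b1 + b0)) \<le> 144 * (a1 * b0 - a0 * b1)^2"
proof -
  have "c^4 * ((a1 + b1) / c * (1 - (a1 + b1) / c) * ((a1 + a0) / c) * (1 - (a1 + a0) / c))
      = (a1 + b1) * (c - (a1 + b1)) * ((a1 + a0) * (c - (a1 + a0)))"
    using c(2) by (simp add: field_simps power4_eq_xxxx)
  also have "\<dots> = (a1 + b1) * (a0 + b0) * ((a1 + a0) * (b1 + b0))" unfolding c(1) by (simp add: algebra_simps)
  finally have lhs: "c^4 * ((a1 + b1) / c * (1 - (a1 + b1) / c) * ((a1 + a0) / c) * (1 - (a1 + a0) / c))
      = (a1 + b1) * (a0 + b0) * ((a1 + a0) * (b1 + b0))" .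
  define x where "x = a1 / c - (a1 + b1) / c * ((a1 + a0) / c)"
  have "c^2 * x = a1 * c - (a1 + b1) * (a1 + a0)"
    using c(2) unfolding x_def by (simp add: field_simps power2_eq_square)
  also have "\<dots> = a1 * b0 - a0 * b1" unfolding c(1) by (simp add: algebra_simps)
  finally have cx: "c^2 * x = a1 * b0 - a0 * b1" .
  have "c^4 * (144 * x^2) = 144 * (c^2 * x)^2" by (simp add: power2_eq_square power4_eq_xxxx)
  then have "c^4 * (144 * x^2) = 144 * (a1 * b0 - a0 * b1)^2" unfolding cx .
  moreover have "c^4 * ((a1 + b1) / c * (1 - (a1 + b1) / c) * ((a1 + a0) / c) * (1 - (a1 + a0) / c))
      \<le> c^4 * (144 * x^2)"
    using normalized c(2) unfolding x_def by (intro mult_left_mono) auto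
  ultimately show ?thesis using lhs by simp
qed

text \<open>By the convention \<open>x / 0 = 0\<close>, a null set \<open>R\<close> has potential \<open>0\<close>.\<close>

definition potential :: "'a measure \<Rightarrow> 'a set \<Rightarrow> 'a set \<Rightarrow> real" where
  "potential M E R = half_hmean (measure M (R \<inter> E)) (measure M (R - E))"

context prob_space
begin

lemma prob_Int_plus_Diff: "A \<in> events \<Longrightarrow> B \<in> events \<Longrightarrow> prob A = prob (A \<inter> B) + prob (A - B)"
  by (simp add: finite_measure_Diff')

lemma potential_split_decrease:
  fixes R G E :: "'a set"
  defines "N \<equiv> uniform_measure M R"
  assumes sets: "R \<in> events" "G \<in> events" "E \<in> events" and R: "0 < prob R"
    and G: "0 < measure N G" "measure N G < 1"
    and corr: "measure N G * (1 - measure N G) * measure N E * (1 - measure N E)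
      \<le> 144 * (measure N (G \<inter> E) - measure N G * measure N E)^2"
  shows "potential M E (R \<inter> G) + potential M E (R - G) \<le> 143/144 * potential M E R"
proof -
  define a1 b1 a0 b0 where "a1 = prob (R \<inter> G \<inter> E)" and "b1 = prob (R \<inter> G - E)"
    and "a0 = prob ((R - G) \<inter> E)" and "b0 = prob (R - G - E)"
  have RG: "prob (R \<inter> G) = a1 + b1" and "prob (R - G) = a0 + b0"
    using sets prob_Int_plus_Diff[of "R \<inter> G" E] prob_Int_plus_Diff[of "R - G" E]
    by (simp_all add: a1_def b1_def a0_def b0_def)
  then have c: "prob R = a1 + b1 + a0 + b0" using sets prob_Int_plus_Diff[of R G] by simp
  have "R \<inter> E \<inter> G = R \<inter> G \<inter> E" "R \<inter> E - G = (R - G) \<inter> E" "(R - E) \<inter> G = R \<inter> G - E" "R - E - G = R - G - E"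
    by auto
  then have RE: "prob (R \<inter> E) = a1 + a0" and "prob (R - E) = b1 + b0"
    using sets prob_Int_plus_Diff[of "R \<inter> E" G] prob_Int_plus_Diff[of "R - E" G]
    by (simp_all add: a1_def b1_def a0_def b0_def)
  then have pot_R: "potential M E R = half_hmean (a1 + a0) (b1 + b0)" by (simp add: potential_def)
  have eR: "emeasure M R \<noteq> 0" "emeasure M R \<noteq> \<infinity>" using R by (auto simp: emeasure_eq_measure)
  have NG: "measure N G = (a1 + b1) / prob R" and "measure N E = (a1 + a0) / prob R"
    and "measure N (G \<inter> E) = a1 / prob R"
    unfolding N_def using eR sets RG RE by (simp_all add: a1_def Int_assoc)
  then have "(a1 + b1) * (a0 + b0) * ((a1 + a0) * (b1 + b0)) \<le> 144 * (a1 * b0 - a0 * b1)^2"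
    using split_inequality_unnormalize[OF c R] corr by simp
  moreover have "0 < a1 + b1" "0 < a0 + b0" using G R c unfolding NG by (simp_all add: field_simps)
  ultimately show ?thesis
    using half_hmean_split_decrease unfolding pot_R by (simp add: potential_def a1_def b1_def a0_def b0_def)
qed

lemma expectation_square_deviation_boolean:
  fixes Y :: "'a \<Rightarrow> real"
  assumes Y: "Y \<in> borel_measurable M" and Y01: "\<And>x. x \<in> space M \<Longrightarrow> Y x = 0 \<or> Y x = 1"
  shows "expectation (\<lambda>x. (Y x - expectation Y)^2) = expectation Y * (1 - expectation Y)"
proof -
  define q where "q = expectation Y"
  have int_Y: "integrable M Y" by (rule integrable_bounded[OF Y, where B=1]) (use Y01 in force)
  have "expectation (\<lambda>x. (Y x - q)^2) = expectation (\<lambda>x. (1 - 2 * q) * Y x + q^2)"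
    by (rule Bochner_Integration.integral_cong) (use Y01 in \<open>auto simp: power2_eq_square algebra_simps\<close>)
  also have "\<dots> = q * (1 - q)" using int_Y by (simp add: q_def prob_space power2_eq_square algebra_simps)
  finally show ?thesis by (simp add: q_def)
qed

lemma exists_potential_decrease_of_cond_exp_error:
  fixes R E :: "'a set" and Y :: "'a \<Rightarrow> real"
  defines "N \<equiv> uniform_measure M R"
  assumes R: "R \<in> events" "0 < prob R" and E: "E \<in> events"
    and Y: "\<And>x. x \<in> space M \<Longrightarrow> Y x = indicator E x"
    and sub: "subalgebra N F"
    and q: "q = integral\<^sup>L N Y" "0 < q" "q < 1"
    and error: "(\<integral>x. (Y x - real_cond_exp N F Y x)^2 \<partial>N) \<le> q * (1 - q) / 2"
  shows "\<exists>G\<in>sets F. potential M E (R \<inter> G) + potential M E (R - G) \<le> 143/144 * potential M E R"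
proof -
  have "emeasure M R \<noteq> 0" "emeasure M R \<noteq> \<infinity>" using R by (auto simp: emeasure_eq_measure)
  then interpret N: prob_space N unfolding N_def by (rule prob_space_uniform_measure)
  have sets_N[simp]: "sets N = events" "space N = space M" by (simp_all add: N_def)
  have "Y \<in> borel_measurable M" using E by (subst measurable_cong[OF Y]) auto
  moreover have "measurable N (borel :: real measure) = measurable M borel" by (rule measurable_cong_sets) simp_all
  ultimately have Y_N: "Y \<in> borel_measurable N" by simp
  have YG: "(\<integral>x. indicator A x * Y x \<partial>N) = measure N (A \<inter> E)" if "A \<in> events" for A
  proof -
    have "(\<integral>x. indicator A x * Y x \<partial>N) = (\<integral>x. indicator (A \<inter> E) x \<partial>N)"
      by (rule Bochner_Integration.integral_cong) (auto simp: Y indicator_def)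
    then show ?thesis using that E sets.sets_into_space by (simp add: Int_absorb2 Int_assoc)
  qed
  have Y01: "\<And>x. x \<in> space N \<Longrightarrow> Y x = 0 \<or> Y x = 1" using Y by (simp add: indicator_def)
  obtain G where G: "G \<in> sets F" "0 < measure N G" "measure N G < 1"
    "measure N G * (1 - measure N G) * q * (1 - q) \<le> 144 * ((\<integral>x. indicator G x * Y x \<partial>N) - measure N G * q)^2"
    using N.exists_split_of_cond_exp_error[OF sub Y_N Y01 q error] by blast
  have G_ev: "G \<in> events" using G(1) sub by (auto simp: subalgebra_def)
  have "integral\<^sup>L N Y = (\<integral>x. indicator E x \<partial>N)" by (rule Bochner_Integration.integral_cong) (simp_all add: Y)
  then have "q = measure N E" using q(1) E sets.sets_into_space by (simp add: Int_absorb2)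
  with G(4) have "measure N G * (1 - measure N G) * measure N E * (1 - measure N E)
      \<le> 144 * (measure N (G \<inter> E) - measure N G * measure N E)^2"
    unfolding YG[OF G_ev] by simp
  then show ?thesis using potential_split_decrease[OF R(1) G_ev E R(2)] G(1-3) unfolding N_def by blast
qed

end

section \<open>Splitting rectangles under rectangle substitutes\<close>

lemma space_eq_Times_of_sets_eq:
  assumes "sets D = sets (M1 \<Otimes>\<^sub>M M2)"
  shows "space D = space M1 \<times> space M2"
  using sets_eq_imp_space_eq[OF assms] by (simp add: space_pair_measure)

lemma sets_Collect_of_sets_eq:
  assumes "sets D = sets (M1 \<Otimes>\<^sub>M M2)" and "g \<in> (M1 \<Otimes>\<^sub>M M2) \<rightarrow>\<^sub>M count_space UNIV"
  shows "{\<omega> \<in> space D. g \<omega>} \<in> sets D"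
proof -
  have "g \<in> D \<rightarrow>\<^sub>M count_space UNIV" using assms by (simp add: measurable_cong_sets[OF assms(1) refl])
  then show ?thesis by measurable
qed

lemma subalgebra_vimage_fst:
  assumes "sets N = sets (M1 \<Otimes>\<^sub>M M2)"
  shows "subalgebra N (vimage_algebra (space N) fst M1)"
proof -
  have "fst \<in> measurable N M1" using assms by (simp add: measurable_cong_sets[OF assms refl])
  then show ?thesis unfolding subalgebra_def using sets_image_in_sets[OF refl] by auto
qed

lemma subalgebra_vimage_snd:
  assumes "sets N = sets (M1 \<Otimes>\<^sub>M M2)"
  shows "subalgebra N (vimage_algebra (space N) snd M2)"
proof -
  have "snd \<in> measurable N M2" using assms by (simp add: measurable_cong_sets[OF assms refl])
  then show ?thesis unfolding subalgebra_def using sets_image_in_sets[OF refl] by auto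
qed

lemma vimage_fst_Int_Times:
  assumes G: "G \<in> sets (vimage_algebra (space M1 \<times> space M2) fst M1)"
    and S: "S \<in> sets M1" and T: "T \<subseteq> space M2"
  obtains A where "A \<in> sets M1" "A \<subseteq> S" "S \<times> T \<inter> G = A \<times> T" "S \<times> T - G = (S - A) \<times> T"
proof -
  have fst_space: "fst \<in> space M1 \<times> space M2 \<rightarrow> space M1" by auto
  obtain A0 where A0: "A0 \<in> sets M1" and G_eq: "G = fst -` A0 \<inter> (space M1 \<times> space M2)"
    using G unfolding sets_vimage_algebra2[OF fst_space] by blast
  have "S \<subseteq> space M1" using S sets.sets_into_space by blast
  then have "S \<times> T \<inter> G = (A0 \<inter> S) \<times> T" "S \<times> T - G = (S - A0 \<inter> S) \<times> T"
    using T unfolding G_eq by auto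
  moreover have "A0 \<inter> S \<in> sets M1" using A0 S by simp
  ultimately show ?thesis using that[of "A0 \<inter> S"] by blast
qed

lemma vimage_snd_Int_Times:
  assumes G: "G \<in> sets (vimage_algebra (space M1 \<times> space M2) snd M2)"
    and S: "S \<subseteq> space M1" and T: "T \<in> sets M2"
  obtains B where "B \<in> sets M2" "B \<subseteq> T" "S \<times> T \<inter> G = S \<times> B" "S \<times> T - G = S \<times> (T - B)"
proof -
  have snd_space: "snd \<in> space M1 \<times> space M2 \<rightarrow> space M2" by auto
  obtain B0 where B0: "B0 \<in> sets M2" and G_eq: "G = snd -` B0 \<inter> (space M1 \<times> space M2)"
    using G unfolding sets_vimage_algebra2[OF snd_space] by blast
  have "T \<subseteq> space M2" using T sets.sets_into_space by blast
  then have "S \<times> T \<inter> G = S \<times> (B0 \<inter> T)" "S \<times> T - G = S \<times> (T - B0 \<inter> T)"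
    using S unfolding G_eq by auto
  moreover have "B0 \<inter> T \<in> sets M2" using B0 T by simp
  ultimately show ?thesis using that[of "B0 \<inter> T"] by blast
qed

lemma borel_measurable_Yval: "g \<in> M \<rightarrow>\<^sub>M count_space UNIV \<Longrightarrow> Yval g \<in> borel_measurable M"
  unfolding Yval_def[abs_def] by measurable

text \<open>In the definition of rectangle substitutes \<open>mu_st = Y\<close>, so the second error vanishes, and the
  third is the variance \<open>q (1 - q)\<close> of the Boolean \<open>Y\<close>.\<close>

lemma rectangle_substitutes_cond_exp_errors:
  assumes D: "prob_space D" and sD: "sets D = sets (M1 \<Otimes>\<^sub>M M2)"
    and rs: "rectangle_substitutes M1 M2 g D" and S: "S \<in> sets M1" and T: "T \<in> sets M2"
    and pos: "0 < measure D (S \<times> T)" and g: "g \<in> (M1 \<Otimes>\<^sub>M M2) \<rightarrow>\<^sub>M count_space UNIV"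
  defines "N \<equiv> uniform_measure D (S \<times> T)" and "Y \<equiv> Yval g"
  shows "(\<integral>x. (Y x - real_cond_exp N (vimage_algebra (space D) fst M1) Y x)^2 \<partial>N)
       + (\<integral>x. (Y x - real_cond_exp N (vimage_algebra (space D) snd M2) Y x)^2 \<partial>N)
     \<le> integral\<^sup>L N Y * (1 - integral\<^sup>L N Y)"
proof -
  interpret D: prob_space D by fact
  have "emeasure D (S \<times> T) \<noteq> 0" "emeasure D (S \<times> T) \<noteq> \<infinity>"
    using pos by (auto simp: D.emeasure_eq_measure)
  then interpret N: prob_space N unfolding N_def by (rule prob_space_uniform_measure)
  have "measurable N (borel :: real measure) = measurable (M1 \<Otimes>\<^sub>M M2) borel"
    by (rule measurable_cong_sets) (simp_all add: N_def sD)
  then have "Y \<in> borel_measurable N" using borel_measurable_Yval[OF g] by (simp add: Y_def)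
  then have "(\<integral>x. (Y x - integral\<^sup>L N Y)^2 \<partial>N) = integral\<^sup>L N Y * (1 - integral\<^sup>L N Y)"
    by (rule N.expectation_square_deviation_boolean) (simp add: Y_def Yval_def)
  then show ?thesis
    using rs[unfolded rectangle_substitutes_def Let_def, rule_format, OF S T pos]
    unfolding N_def Y_def by simp
qed

lemma exists_fst_split_of_cond_exp_error:
  assumes D: "prob_space D" and sD: "sets D = sets (M1 \<Otimes>\<^sub>M M2)"
    and S: "S \<in> sets M1" and T: "T \<in> sets M2" and pos: "0 < measure D (S \<times> T)"
    and E: "E \<in> sets D" and Y: "\<And>x. x \<in> space D \<Longrightarrow> Y x = indicator E x"
  defines "N \<equiv> uniform_measure D (S \<times> T)"
  assumes q: "q = integral\<^sup>L N Y" "0 < q" "q < 1"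
    and error: "(\<integral>x. (Y x - real_cond_exp N (vimage_algebra (space D) fst M1) Y x)^2 \<partial>N) \<le> q * (1 - q) / 2"
  shows "\<exists>A\<in>sets M1. A \<subseteq> S \<and>
    potential D E (A \<times> T) + potential D E ((S - A) \<times> T) \<le> 143/144 * potential D E (S \<times> T)"
proof -
  have R: "S \<times> T \<in> sets D" using S T sD by simp
  have "subalgebra N (vimage_algebra (space D) fst M1)"
    using subalgebra_vimage_fst[of N M1 M2] sD by (simp add: N_def)
  from prob_space.exists_potential_decrease_of_cond_exp_error[OF D R pos E Y this[unfolded N_def]
      q[unfolded N_def] error[unfolded N_def]]
  obtain G where G: "G \<in> sets (vimage_algebra (space D) fst M1)"
    and decrease: "potential D E (S \<times> T \<inter> G) + potential D E (S \<times> T - G) \<le> 143/144 * potential D E (S \<times> T)"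
    by blast
  have "T \<subseteq> space M2" using T sets.sets_into_space by blast
  then obtain A where "A \<in> sets M1" "A \<subseteq> S" "S \<times> T \<inter> G = A \<times> T" "S \<times> T - G = (S - A) \<times> T"
    using vimage_fst_Int_Times[OF G[unfolded space_eq_Times_of_sets_eq[OF sD]] S] by blast
  then show ?thesis using decrease by auto
qed

lemma exists_snd_split_of_cond_exp_error:
  assumes D: "prob_space D" and sD: "sets D = sets (M1 \<Otimes>\<^sub>M M2)"
    and S: "S \<in> sets M1" and T: "T \<in> sets M2" and pos: "0 < measure D (S \<times> T)"
    and E: "E \<in> sets D" and Y: "\<And>x. x \<in> space D \<Longrightarrow> Y x = indicator E x"
  defines "N \<equiv> uniform_measure D (S \<times> T)"
  assumes q: "q = integral\<^sup>L N Y" "0 < q" "q < 1"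
    and error: "(\<integral>x. (Y x - real_cond_exp N (vimage_algebra (space D) snd M2) Y x)^2 \<partial>N) \<le> q * (1 - q) / 2"
  shows "\<exists>B\<in>sets M2. B \<subseteq> T \<and>
    potential D E (S \<times> B) + potential D E (S \<times> (T - B)) \<le> 143/144 * potential D E (S \<times> T)"
proof -
  have R: "S \<times> T \<in> sets D" using S T sD by simp
  have "subalgebra N (vimage_algebra (space D) snd M2)"
    using subalgebra_vimage_snd[of N M1 M2] sD by (simp add: N_def)
  from prob_space.exists_potential_decrease_of_cond_exp_error[OF D R pos E Y this[unfolded N_def]
      q[unfolded N_def] error[unfolded N_def]]
  obtain G where G: "G \<in> sets (vimage_algebra (space D) snd M2)"
    and decrease: "potential D E (S \<times> T \<inter> G) + potential D E (S \<times> T - G) \<le> 143/144 * potential D E (S \<times> T)"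
    by blast
  have "S \<subseteq> space M1" using S sets.sets_into_space by blast
  then obtain B where "B \<in> sets M2" "B \<subseteq> T" "S \<times> T \<inter> G = S \<times> B" "S \<times> T - G = S \<times> (T - B)"
    using vimage_snd_Int_Times[OF G[unfolded space_eq_Times_of_sets_eq[OF sD]] _ T] by blast
  then show ?thesis using decrease by auto
qed

lemma exists_rectangle_split:
  assumes D: "prob_space D" and sD: "sets D = sets (M1 \<Otimes>\<^sub>M M2)"
    and g: "g \<in> (M1 \<Otimes>\<^sub>M M2) \<rightarrow>\<^sub>M count_space UNIV" and rs: "rectangle_substitutes M1 M2 g D"
    and S: "S \<in> sets M1" and T: "T \<in> sets M2"
  defines "E \<equiv> {\<omega> \<in> space D. g \<omega>}"
  assumes pos: "0 < measure D (S \<times> T \<inter> E)" and neg: "0 < measure D (S \<times> T - E)"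
  shows "(\<exists>A\<in>sets M1. A \<subseteq> S \<and>
            potential D E (A \<times> T) + potential D E ((S - A) \<times> T) \<le> 143/144 * potential D E (S \<times> T))
       \<or> (\<exists>B\<in>sets M2. B \<subseteq> T \<and>
            potential D E (S \<times> B) + potential D E (S \<times> (T - B)) \<le> 143/144 * potential D E (S \<times> T))"
proof -
  interpret prob_space D by fact
  define N where "N = uniform_measure D (S \<times> T)"
  define q where "q = integral\<^sup>L N (Yval g)"
  have R: "S \<times> T \<in> events" using S T sD by simp
  have E_ev: "E \<in> events" unfolding E_def by (rule sets_Collect_of_sets_eq[OF sD g])
  have Y: "\<And>x. x \<in> space D \<Longrightarrow> Yval g x = indicator E x" by (simp add: Yval_def E_def indicator_def)
  have R_pos: "0 < prob (S \<times> T)" using prob_Int_plus_Diff[OF R E_ev] pos neg by simp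
  then have "emeasure D (S \<times> T) \<noteq> 0" "emeasure D (S \<times> T) \<noteq> \<infinity>" by (auto simp: emeasure_eq_measure)
  moreover have "q = (\<integral>x. indicator E x \<partial>N)"
    unfolding q_def by (rule Bochner_Integration.integral_cong) (simp_all add: N_def Y)
  ultimately have "q = prob (S \<times> T \<inter> E) / prob (S \<times> T)"
    using E_ev sets.sets_into_space by (simp add: N_def Int_absorb2)
  then have q01: "0 < q" "q < 1" using pos neg R_pos prob_Int_plus_Diff[OF R E_ev] by simp_all
  have "(\<integral>x. (Yval g x - real_cond_exp N (vimage_algebra (space D) fst M1) (Yval g) x)^2 \<partial>N)
      + (\<integral>x. (Yval g x - real_cond_exp N (vimage_algebra (space D) snd M2) (Yval g) x)^2 \<partial>N) \<le> q * (1 - q)"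
    using rectangle_substitutes_cond_exp_errors[OF D sD rs S T R_pos g] unfolding N_def q_def .
  then consider
      "(\<integral>x. (Yval g x - real_cond_exp N (vimage_algebra (space D) fst M1) (Yval g) x)^2 \<partial>N) \<le> q * (1 - q) / 2"
    | "(\<integral>x. (Yval g x - real_cond_exp N (vimage_algebra (space D) snd M2) (Yval g) x)^2 \<partial>N) \<le> q * (1 - q) / 2"
    by linarith
  then show ?thesis
  proof cases
    case 1
    from exists_fst_split_of_cond_exp_error[OF D sD S T R_pos E_ev Y q_def[unfolded N_def] q01 this[unfolded N_def]]
    show ?thesis ..
  next
    case 2
    from exists_snd_split_of_cond_exp_error[OF D sD S T R_pos E_ev Y q_def[unfolded N_def] q01 this[unfolded N_def]]
    show ?thesis ..
  qed
qed

section \<open>Protocols\<close>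

lemma measurable_run_protocol:
  "protocol_measurable M1 M2 P \<Longrightarrow> (\<lambda>\<omega>. run_protocol P (fst \<omega>) (snd \<omega>)) \<in> (M1 \<Otimes>\<^sub>M M2) \<rightarrow>\<^sub>M count_space UNIV"
proof (induction P)
  case (AliceSends f P1 P2)
  then have [measurable]: "f \<in> M1 \<rightarrow>\<^sub>M count_space UNIV"
    "(\<lambda>\<omega>. run_protocol P1 (fst \<omega>) (snd \<omega>)) \<in> (M1 \<Otimes>\<^sub>M M2) \<rightarrow>\<^sub>M count_space UNIV"
    "(\<lambda>\<omega>. run_protocol P2 (fst \<omega>) (snd \<omega>)) \<in> (M1 \<Otimes>\<^sub>M M2) \<rightarrow>\<^sub>M count_space UNIV" by auto
  show ?case by simp measurable
next
  case (BobSends f P1 P2)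
  then have [measurable]: "f \<in> M2 \<rightarrow>\<^sub>M count_space UNIV"
    "(\<lambda>\<omega>. run_protocol P1 (fst \<omega>) (snd \<omega>)) \<in> (M1 \<Otimes>\<^sub>M M2) \<rightarrow>\<^sub>M count_space UNIV"
    "(\<lambda>\<omega>. run_protocol P2 (fst \<omega>) (snd \<omega>)) \<in> (M1 \<Otimes>\<^sub>M M2) \<rightarrow>\<^sub>M count_space UNIV" by auto
  show ?case by simp measurable
qed simp

definition protocol_error ::
  "('s \<times> 't) measure \<Rightarrow> ('s \<times> 't \<Rightarrow> bool) \<Rightarrow> ('s, 't) protocol \<Rightarrow> ('s \<times> 't) set \<Rightarrow> real" where
  "protocol_error D g P R = measure D {\<omega> \<in> R. run_protocol P (fst \<omega>) (snd \<omega>) \<noteq> g \<omega>}"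

lemma sets_protocol_error:
  assumes sD: "sets D = sets (M1 \<Otimes>\<^sub>M M2)" and g: "g \<in> (M1 \<Otimes>\<^sub>M M2) \<rightarrow>\<^sub>M count_space UNIV"
    and P: "protocol_measurable M1 M2 P" and R: "R \<in> sets D"
  shows "{\<omega> \<in> R. run_protocol P (fst \<omega>) (snd \<omega>) \<noteq> g \<omega>} \<in> sets D"
proof -
  note [measurable] = g measurable_run_protocol[OF P]
  have "{\<omega> \<in> space (M1 \<Otimes>\<^sub>M M2). run_protocol P (fst \<omega>) (snd \<omega>) \<noteq> g \<omega>} \<in> sets D"
    unfolding sD by measurable
  moreover have "R \<subseteq> space (M1 \<Otimes>\<^sub>M M2)" using sets.sets_into_space[OF R] sets_eq_imp_space_eq[OF sD] by simp
  then have "{\<omega> \<in> R. run_protocol P (fst \<omega>) (snd \<omega>) \<noteq> g \<omega>}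
      = R \<inter> {\<omega> \<in> space (M1 \<Otimes>\<^sub>M M2). run_protocol P (fst \<omega>) (snd \<omega>) \<noteq> g \<omega>}" by auto
  ultimately show ?thesis using R by simp
qed

lemma prob_correct_eq_1_minus_protocol_error:
  assumes D: "prob_space D" and sD: "sets D = sets (M1 \<Otimes>\<^sub>M M2)"
    and g: "g \<in> (M1 \<Otimes>\<^sub>M M2) \<rightarrow>\<^sub>M count_space UNIV" and P: "protocol_measurable M1 M2 P"
  shows "measure D {\<omega> \<in> space D. run_protocol P (fst \<omega>) (snd \<omega>) = g \<omega>} = 1 - protocol_error D g P (space D)"
proof -
  have "{\<omega> \<in> space D. run_protocol P (fst \<omega>) (snd \<omega>) = g \<omega>}
      = space D - {\<omega> \<in> space D. run_protocol P (fst \<omega>) (snd \<omega>) \<noteq> g \<omega>}" by auto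
  then show ?thesis
    using prob_space.prob_compl[OF D sets_protocol_error[OF sD g P sets.top]] unfolding protocol_error_def by simp
qed

lemma protocol_error_AliceSends:
  assumes D: "prob_space D" and sD: "sets D = sets (M1 \<Otimes>\<^sub>M M2)"
    and g: "g \<in> (M1 \<Otimes>\<^sub>M M2) \<rightarrow>\<^sub>M count_space UNIV"
    and P1: "protocol_measurable M1 M2 P1" and P2: "protocol_measurable M1 M2 P2"
    and A: "A \<in> sets M1" "A \<subseteq> S" and S: "S \<in> sets M1" and T: "T \<in> sets M2"
  shows "protocol_error D g (AliceSends (\<lambda>s. s \<in> A) P1 P2) (S \<times> T)
       = protocol_error D g P1 (A \<times> T) + protocol_error D g P2 ((S - A) \<times> T)"
proof -
  have "{\<omega> \<in> S \<times> T. run_protocol (AliceSends (\<lambda>s. s \<in> A) P1 P2) (fst \<omega>) (snd \<omega>) \<noteq> g \<omega>}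
      = {\<omega> \<in> A \<times> T. run_protocol P1 (fst \<omega>) (snd \<omega>) \<noteq> g \<omega>}
        \<union> {\<omega> \<in> (S - A) \<times> T. run_protocol P2 (fst \<omega>) (snd \<omega>) \<noteq> g \<omega>}"
    using A by auto
  moreover have "A \<times> T \<in> sets D" "(S - A) \<times> T \<in> sets D" using A S T sD by auto
  ultimately show ?thesis
    unfolding protocol_error_def
    using prob_space.finite_measure[OF D] sets_protocol_error[OF sD g P1] sets_protocol_error[OF sD g P2]
    by (auto intro!: finite_measure.finite_measure_Union)
qed

lemma protocol_error_BobSends:
  assumes D: "prob_space D" and sD: "sets D = sets (M1 \<Otimes>\<^sub>M M2)"
    and g: "g \<in> (M1 \<Otimes>\<^sub>M M2) \<rightarrow>\<^sub>M count_space UNIV"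
    and P1: "protocol_measurable M1 M2 P1" and P2: "protocol_measurable M1 M2 P2"
    and B: "B \<in> sets M2" "B \<subseteq> T" and S: "S \<in> sets M1" and T: "T \<in> sets M2"
  shows "protocol_error D g (BobSends (\<lambda>t. t \<in> B) P1 P2) (S \<times> T)
       = protocol_error D g P1 (S \<times> B) + protocol_error D g P2 (S \<times> (T - B))"
proof -
  have "{\<omega> \<in> S \<times> T. run_protocol (BobSends (\<lambda>t. t \<in> B) P1 P2) (fst \<omega>) (snd \<omega>) \<noteq> g \<omega>}
      = {\<omega> \<in> S \<times> B. run_protocol P1 (fst \<omega>) (snd \<omega>) \<noteq> g \<omega>}
        \<union> {\<omega> \<in> S \<times> (T - B). run_protocol P2 (fst \<omega>) (snd \<omega>) \<noteq> g \<omega>}"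
    using B by auto
  moreover have "S \<times> B \<in> sets D" "S \<times> (T - B) \<in> sets D" using B S T sD by auto
  ultimately show ?thesis
    unfolding protocol_error_def
    using prob_space.finite_measure[OF D] sets_protocol_error[OF sD g P1] sets_protocol_error[OF sD g P2]
    by (auto intro!: finite_measure.finite_measure_Union)
qed

lemma protocol_error_Output_majority:
  fixes D :: "('s \<times> 't) measure" and g :: "'s \<times> 't \<Rightarrow> bool"
  assumes "R \<subseteq> space D"
  defines "E \<equiv> {\<omega> \<in> space D. g \<omega>}"
  shows "protocol_error D g (Output (measure D (R - E) \<le> measure D (R \<inter> E))) R \<le> 2 * potential D E R"
proof -
  have "{\<omega> \<in> R. True \<noteq> g \<omega>} = R - E" "{\<omega> \<in> R. False \<noteq> g \<omega>} = R \<inter> E" using assms by auto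
  then have "protocol_error D g (Output (measure D (R - E) \<le> measure D (R \<inter> E))) R
      = min (measure D (R \<inter> E)) (measure D (R - E))"
    unfolding protocol_error_def by (cases "measure D (R - E) \<le> measure D (R \<inter> E)") (simp_all add: min_def)
  also have "\<dots> \<le> 2 * potential D E R" unfolding potential_def by (rule min_le_2_half_hmean) auto
  finally show ?thesis .
qed

lemma exists_Output_protocol:
  fixes D :: "('s \<times> 't) measure" and g :: "'s \<times> 't \<Rightarrow> bool"
  assumes sD: "sets D = sets (M1 \<Otimes>\<^sub>M M2)" and S: "S \<in> sets M1" and T: "T \<in> sets M2"
  defines "E \<equiv> {\<omega> \<in> space D. g \<omega>}"
  shows "\<exists>P. protocol_measurable M1 M2 P \<and> protocol_cost P = 0 \<and>
    protocol_error D g P (S \<times> T) \<le> 2 * potential D E (S \<times> T)"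
proof -
  have "S \<times> T \<subseteq> space D"
    using sets.sets_into_space[OF S] sets.sets_into_space[OF T] by (auto simp: space_eq_Times_of_sets_eq[OF sD])
  then have "protocol_error D g (Output (measure D (S \<times> T - E) \<le> measure D (S \<times> T \<inter> E))) (S \<times> T)
      \<le> 2 * potential D E (S \<times> T)"
    unfolding E_def by (rule protocol_error_Output_majority)
  then show ?thesis by (intro exI[of _ "Output (measure D (S \<times> T - E) \<le> measure D (S \<times> T \<inter> E))"]) simp
qed

lemma exists_AliceSends_protocol:
  assumes D: "prob_space D" and sD: "sets D = sets (M1 \<Otimes>\<^sub>M M2)"
    and g: "g \<in> (M1 \<Otimes>\<^sub>M M2) \<rightarrow>\<^sub>M count_space UNIV"
    and A: "A \<in> sets M1" "A \<subseteq> S" and S: "S \<in> sets M1" and T: "T \<in> sets M2"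
    and P1: "\<exists>P. protocol_measurable M1 M2 P \<and> protocol_cost P \<le> k \<and>
      protocol_error D g P (A \<times> T) \<le> c * potential D E (A \<times> T)"
    and P2: "\<exists>P. protocol_measurable M1 M2 P \<and> protocol_cost P \<le> k \<and>
      protocol_error D g P ((S - A) \<times> T) \<le> c * potential D E ((S - A) \<times> T)"
    and decrease: "potential D E (A \<times> T) + potential D E ((S - A) \<times> T) \<le> r * potential D E (S \<times> T)"
    and c: "0 \<le> c"
  shows "\<exists>P. protocol_measurable M1 M2 P \<and> protocol_cost P \<le> Suc k \<and>
      protocol_error D g P (S \<times> T) \<le> c * r * potential D E (S \<times> T)"
proof -
  obtain P1 P2 where P: "protocol_measurable M1 M2 P1" "protocol_measurable M1 M2 P2"
    "protocol_cost P1 \<le> k" "protocol_cost P2 \<le> k"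
    "protocol_error D g P1 (A \<times> T) \<le> c * potential D E (A \<times> T)"
    "protocol_error D g P2 ((S - A) \<times> T) \<le> c * potential D E ((S - A) \<times> T)"
    using P1 P2 by blast
  have "protocol_error D g (AliceSends (\<lambda>s. s \<in> A) P1 P2) (S \<times> T)
      \<le> c * (potential D E (A \<times> T) + potential D E ((S - A) \<times> T))"
    using P protocol_error_AliceSends[OF D sD g P(1,2) A S T] by (simp add: algebra_simps)
  also have "\<dots> \<le> c * r * potential D E (S \<times> T)" using mult_left_mono[OF decrease c] by simp
  finally have "protocol_error D g (AliceSends (\<lambda>s. s \<in> A) P1 P2) (S \<times> T) \<le> c * r * potential D E (S \<times> T)" .
  moreover have "(\<lambda>s. s \<in> A) \<in> M1 \<rightarrow>\<^sub>M count_space UNIV" using A(1) by measurable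
  ultimately show ?thesis using P by (intro exI[of _ "AliceSends (\<lambda>s. s \<in> A) P1 P2"]) auto
qed

lemma exists_BobSends_protocol:
  assumes D: "prob_space D" and sD: "sets D = sets (M1 \<Otimes>\<^sub>M M2)"
    and g: "g \<in> (M1 \<Otimes>\<^sub>M M2) \<rightarrow>\<^sub>M count_space UNIV"
    and B: "B \<in> sets M2" "B \<subseteq> T" and S: "S \<in> sets M1" and T: "T \<in> sets M2"
    and P1: "\<exists>P. protocol_measurable M1 M2 P \<and> protocol_cost P \<le> k \<and>
      protocol_error D g P (S \<times> B) \<le> c * potential D E (S \<times> B)"
    and P2: "\<exists>P. protocol_measurable M1 M2 P \<and> protocol_cost P \<le> k \<and>
      protocol_error D g P (S \<times> (T - B)) \<le> c * potential D E (S \<times> (T - B))"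
    and decrease: "potential D E (S \<times> B) + potential D E (S \<times> (T - B)) \<le> r * potential D E (S \<times> T)"
    and c: "0 \<le> c"
  shows "\<exists>P. protocol_measurable M1 M2 P \<and> protocol_cost P \<le> Suc k \<and>
      protocol_error D g P (S \<times> T) \<le> c * r * potential D E (S \<times> T)"
proof -
  obtain P1 P2 where P: "protocol_measurable M1 M2 P1" "protocol_measurable M1 M2 P2"
    "protocol_cost P1 \<le> k" "protocol_cost P2 \<le> k"
    "protocol_error D g P1 (S \<times> B) \<le> c * potential D E (S \<times> B)"
    "protocol_error D g P2 (S \<times> (T - B)) \<le> c * potential D E (S \<times> (T - B))"
    using P1 P2 by blast
  have "protocol_error D g (BobSends (\<lambda>t. t \<in> B) P1 P2) (S \<times> T)
      \<le> c * (potential D E (S \<times> B) + potential D E (S \<times> (T - B)))"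
    using P protocol_error_BobSends[OF D sD g P(1,2) B S T] by (simp add: algebra_simps)
  also have "\<dots> \<le> c * r * potential D E (S \<times> T)" using mult_left_mono[OF decrease c] by simp
  finally have "protocol_error D g (BobSends (\<lambda>t. t \<in> B) P1 P2) (S \<times> T) \<le> c * r * potential D E (S \<times> T)" .
  moreover have "(\<lambda>t. t \<in> B) \<in> M2 \<rightarrow>\<^sub>M count_space UNIV" using B(1) by measurable
  ultimately show ?thesis using P by (intro exI[of _ "BobSends (\<lambda>t. t \<in> B) P1 P2"]) auto
qed

lemma exists_protocol_error_le:
  fixes D :: "('s \<times> 't) measure" and g :: "'s \<times> 't \<Rightarrow> bool"
  assumes D: "prob_space D" and sD: "sets D = sets (M1 \<Otimes>\<^sub>M M2)"
    and g: "g \<in> (M1 \<Otimes>\<^sub>M M2) \<rightarrow>\<^sub>M count_space UNIV" and rs: "rectangle_substitutes M1 M2 g D"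
    and S: "S \<in> sets M1" and T: "T \<in> sets M2"
  defines "E \<equiv> {\<omega> \<in> space D. g \<omega>}"
  shows "\<exists>P. protocol_measurable M1 M2 P \<and> protocol_cost P \<le> k \<and>
           protocol_error D g P (S \<times> T) \<le> 2 * (143/144)^k * potential D E (S \<times> T)"
  using S T
proof (induction k arbitrary: S T)
  case 0
  then show ?case using exists_Output_protocol[OF sD, of S T g] unfolding E_def by auto
next
  case (Suc k)
  note S = Suc.prems(1) and T = Suc.prems(2)
  show ?case
  proof (cases "0 < measure D (S \<times> T \<inter> E) \<and> 0 < measure D (S \<times> T - E)")
    case False
    then have "measure D (S \<times> T \<inter> E) = 0 \<or> measure D (S \<times> T - E) = 0"
      using measure_nonneg[of D "S \<times> T \<inter> E"] measure_nonneg[of D "S \<times> T - E"] by linarith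
    then have "potential D E (S \<times> T) = 0" by (auto simp: potential_def half_hmean_def)
    then show ?thesis using exists_Output_protocol[OF sD S T, of g] unfolding E_def by auto
  next
    case True
    have c: "0 \<le> 2 * (143/144::real)^k" by simp
    consider (Alice) A where "A \<in> sets M1" "A \<subseteq> S"
        "potential D E (A \<times> T) + potential D E ((S - A) \<times> T) \<le> 143/144 * potential D E (S \<times> T)"
      | (Bob) B where "B \<in> sets M2" "B \<subseteq> T"
        "potential D E (S \<times> B) + potential D E (S \<times> (T - B)) \<le> 143/144 * potential D E (S \<times> T)"
      using exists_rectangle_split[OF D sD g rs S T] True unfolding E_def by blast
    then show ?thesis
    proof cases
      case Alice
      then have "S - A \<in> sets M1" using S by auto
      from exists_AliceSends_protocol[OF D sD g Alice(1,2) S T Suc.IH[OF Alice(1) T] Suc.IH[OF this T] Alice(3) c]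
      show ?thesis by (simp only: power_Suc2 mult.assoc)
    next
      case Bob
      then have "T - B \<in> sets M2" using T by auto
      from exists_BobSends_protocol[OF D sD g Bob(1,2) S T Suc.IH[OF S Bob(1)] Suc.IH[OF S this] Bob(3) c]
      show ?thesis by (simp only: power_Suc2 mult.assoc)
    qed
  qed
qed

lemma potential_space_le_quarter:
  assumes "prob_space D" "E \<in> sets D"
  shows "potential D E (space D) \<le> 1/4"
proof -
  interpret prob_space D by fact
  define a b where "a = prob (space D \<inter> E)" and "b = prob (space D - E)"
  have ab: "a + b = 1" using prob_Int_plus_Diff[OF sets.top assms(2)] by (simp add: a_def b_def prob_space)
  have "4 * (a * b) \<le> (a + b)^2" using zero_le_power2[of "a - b"] by (simp add: power2_eq_square algebra_simps)
  then show ?thesis using ab by (simp add: potential_def half_hmean_def a_def b_def)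
qed

lemma power_ceiling_ln_le:
  fixes \<delta> :: real
  assumes "0 < \<delta>" "\<delta> < 1"
  shows "(143/144::real) ^ nat \<lceil>144 * ln (1/\<delta>)\<rceil> \<le> \<delta>"
proof -
  define L where "L = ln (1/\<delta>)"
  define k where "k = nat \<lceil>144 * L\<rceil>"
  have "0 < L" using assms by (simp add: L_def)
  then have "144 * L \<le> real k" unfolding k_def by (simp add: of_nat_nat)
  have "(143/144::real) ^ k \<le> exp (-1/144) ^ k"
    using exp_ge_add_one_self[of "-1/144::real"] by (intro power_mono) simp_all
  also have "\<dots> = exp (- real k / 144)" by (simp flip: exp_of_nat_mult)
  also have "\<dots> \<le> exp (- L)" using \<open>144 * L \<le> real k\<close> by simp
  also have "\<dots> = \<delta>" using assms by (simp add: L_def ln_div)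
  finally show ?thesis unfolding k_def L_def .
qed

lemma nat_ceiling_ln_le:
  fixes \<delta> :: real
  assumes "0 < \<delta>" "\<delta> < 1"
  shows "real (nat \<lceil>144 * ln (1/\<delta>)\<rceil>) \<le> 145 * (1 + ln (1/\<delta>))"
proof -
  define L where "L = ln (1/\<delta>)"
  have "0 < L" using assms by (simp add: L_def)
  then have "real (nat \<lceil>144 * L\<rceil>) = real_of_int \<lceil>144 * L\<rceil>" by (simp add: of_nat_nat)
  also have "\<dots> \<le> 144 * L + 1" by (rule of_int_ceiling_le_add_one)
  also have "\<dots> \<le> 145 * (1 + L)" using \<open>0 < L\<close> by simp
  finally show ?thesis unfolding L_def .
qed

theorem mainTheorem20:
  "\<exists>C::real. C > 0 \<and>
    (\<forall>(M1::'s measure) (M2::'t measure) (D::('s \<times> 't) measure) (g::'s \<times> 't \<Rightarrow> bool).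
      prob_space D \<longrightarrow> sets D = sets (M1 \<Otimes>\<^sub>M M2) \<longrightarrow>
      g \<in> (M1 \<Otimes>\<^sub>M M2) \<rightarrow>\<^sub>M count_space UNIV \<longrightarrow>
      rectangle_substitutes M1 M2 g D \<longrightarrow>
      (\<forall>\<delta>::real. 0 < \<delta> \<and> \<delta> < 1 \<longrightarrow>
        (\<exists>P::('s, 't) protocol.
           protocol_measurable M1 M2 P \<and>
           real (protocol_cost P) \<le> C * (1 + ln (1 / \<delta>)) \<and>
           measure D {\<omega> \<in> space D. run_protocol P (fst \<omega>) (snd \<omega>) = g \<omega>} \<ge> 1 - \<delta>)))"
proof (intro exI[of _ "145::real"] conjI allI impI)
  fix M1 :: "'s measure" and M2 :: "'t measure" and D :: "('s \<times> 't) measure" and g and \<delta> :: real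
  assume D: "prob_space D" and sD: "sets D = sets (M1 \<Otimes>\<^sub>M M2)"
    and g: "g \<in> (M1 \<Otimes>\<^sub>M M2) \<rightarrow>\<^sub>M count_space UNIV"
    and rs: "rectangle_substitutes M1 M2 g D" and \<delta>: "0 < \<delta> \<and> \<delta> < 1"
  interpret prob_space D by fact
  define k where "k = nat \<lceil>144 * ln (1/\<delta>)\<rceil>"
  define E where "E = {\<omega> \<in> space D. g \<omega>}"
  have space_D: "space D = space M1 \<times> space M2" by (rule space_eq_Times_of_sets_eq[OF sD])
  obtain P where P: "protocol_measurable M1 M2 P" "protocol_cost P \<le> k"
    "protocol_error D g P (space D) \<le> 2 * (143/144)^k * potential D E (space D)"
    using exists_protocol_error_le[OF D sD g rs sets.top sets.top, of k] unfolding space_D E_def by blast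
  have "E \<in> events" unfolding E_def by (rule sets_Collect_of_sets_eq[OF sD g])
  then have "2 * (143/144)^k * potential D E (space D) \<le> 2 * \<delta> * (1/4)"
    using power_ceiling_ln_le[of \<delta>] \<delta> potential_space_le_quarter[OF D] unfolding k_def
    by (intro mult_mono) (auto simp: potential_def half_hmean_def)
  then have "protocol_error D g P (space D) \<le> \<delta>" using P(3) \<delta> by linarith
  moreover note prob_correct_eq_1_minus_protocol_error[OF D sD g P(1)]
  moreover have "real (protocol_cost P) \<le> 145 * (1 + ln (1 / \<delta>))"
    using P(2) nat_ceiling_ln_le[of \<delta>] \<delta> unfolding k_def by linarith
  ultimately show "\<exists>P. protocol_measurable M1 M2 P \<and> real (protocol_cost P) \<le> 145 * (1 + ln (1 / \<delta>)) \<and>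
      1 - \<delta> \<le> measure D {\<omega> \<in> space D. run_protocol P (fst \<omega>) (snd \<omega>) = g \<omega>}"
    using P(1) by auto
qed simp

end
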